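(* Under the assumptions stated in the context, the function $x_i^{\mathrm{cv}}$ is locally Lipschitz continuous and directionally differentiable at $\hat{\mathbf{p}}$. Moreover, let $\hat{\boldsymbol{\xi}}$ be an arbitrary optimal solution of the optimization problem $\min_{\boldsymbol{\xi}\in \mathbb{R}^{n_x}} \xi_i$ s.t. $\mathbf{h}(\boldsymbol{\xi},\hat{\mathbf{p}})=\mathbf{0}$, $\mathbf{g}(\boldsymbol{\xi},\hat{\mathbf{p}})\le \mathbf{0}$ (whose optimal value is $x_i^{\mathrm{cv}}(\hat{\mathbf{p}})$). Then, for each direction $\mathbf{d}\in\mathbb{R}^{n_p}$, \begin{equation*} \begin{aligned} [x_i^{\mathrm{cv}}]'(\hat{\mathbf{p}};\mathbf{d})&\equiv\min_{\mathbf{w}\in\mathbb{R}^{n_x}}\quad w_i\\ \text{s.t.}\quad &[\nabla_\mathbf{x}g_k(\hat{\boldsymbol{\xi}},\hat{\mathbf{p}})]^\top\mathbf{w}\le-[\nabla_\mathbf{y}g_k(\hat{\boldsymbol{\xi}},\hat{\mathbf{p}})]^\top\mathbf{d},\quad\forall k\in\{1,...,n_g\}\text{ such that }g_k(\hat{\boldsymbol{\xi}},\hat{\mathbf{p}})=0,\\ &[\nabla_\mathbf{x}h_j(\hat{\boldsymbol{\xi}},\hat{\mathbf{p}})]^\top\mathbf{w}=-[\nabla_\mathbf{y}h_j(\hat{\boldsymbol{\xi}},\hat{\mathbf{p}})]^\top\mathbf{d},\quad\forall j\in\{1,...,l\}. \end{aligned} \end{equation*}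
   Context: Setting: a residual function $\mathbf{f}:\mathbb{R}^{n_x}\times\mathbb{R}^{n_p}\to\mathbb{R}^{n_x}$, a convex compact set $P\subset\mathbb{R}^{n_p}$, and $Q\subset P$ the (nonempty) set of $\mathbf{p}\in P$ for which $\mathbf{f}(\mathbf{z},\mathbf{p})=\mathbf{0}$ has a solution; an implicit function $\mathbf{x}:Q\to\mathbb{R}^{n_x}$ satisfies $\mathbf{f}(\mathbf{x}(\mathbf{p}),\mathbf{p})=\mathbf{0}$ with $\mathbf{x}(\mathbf{p})\in X:=[\mathbf{x}^{\mathrm{L}},\mathbf{x}^{\mathrm{U}}]$ for all $\mathbf{p}\in Q$. Given convex and concave relaxations $\mathbf{f}^{\mathrm{cv}},\mathbf{f}^{\mathrm{cc}}$ of $\mathbf{f}$ on $X\times P$, the implicit function convex relaxation is $x_i^{\mathrm{cv}}(\mathbf{p}):=\inf_{\boldsymbol{\xi}\in X}\xi_i$ s.t. $\mathbf{f}^{\mathrm{cv}}(\boldsymbol{\xi},\mathbf{p})\le\mathbf{0}\le\mathbf{f}^{\mathrm{cc}}(\boldsymbol{\xi},\mathbf{p})$ (with value $+\infty$ if infeasible). Assume $\mathbf{f}\equiv(\tilde{\mathbf{f}},\mathbf{h})$ where $\mathbf{h}:\mathbb{R}^{n_x}\times\mathbb{R}^{n_p}\to\mathbb{R}^{n_h}$ is affine and each $\tilde f_k$ is not affine, and the relaxations of each $\tilde f_k$ are piecewise differentiable: $\tilde f_k^{\mathrm{cv}}=\max_j \tilde f_k^{\mathrm{cv},j}$ with each $\tilde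 f_k^{\mathrm{cv},j}$ continuously differentiable and convex ($j=1,\dots,k_k$), and $\tilde f_k^{\mathrm{cc}}=\min_j \tilde f_k^{\mathrm{cc},j}$ with each $\tilde f_k^{\mathrm{cc},j}$ continuously differentiable and concave ($j=1,\dots,l_k$). Then for $\mathbf{p}\in Q$, $x_i^{\mathrm{cv}}(\mathbf{p})=\min_{\boldsymbol{\xi}\in\mathbb{R}^{n_x}}\xi_i$ s.t. $\mathbf{h}(\boldsymbol{\xi},\mathbf{p})=\mathbf{0}$, $\mathbf{g}(\boldsymbol{\xi},\mathbf{p})\le\mathbf{0}$, where $\mathbf{g}:\mathbb{R}^{n_x}\times\mathbb{R}^{n_p}\to\mathbb{R}^{n_g}$ collects all the inequality constraints $\tilde f_k^{\mathrm{cv},j}(\boldsymbol{\xi},\mathbf{p})\le 0$, $\tilde f_k^{\mathrm{cc},j}(\boldsymbol{\xi},\mathbf{p})\ge 0$ (written as $\le 0$ constraints) together with the box constraint $\boldsymbol{\xi}\in X$. Further assume, at some $\hat{\mathbf{p}}\in\mathrm{int}(Q)$: the (constant) gradients of the components $h_j$ with respect to $\boldsymbol{\xi}$ are linearly independent, and there is a neighborhood $N_{\hat{\mathbf{p}}}\subset Q$ of $\hat{\mathbf{p}}$ such that for each $\mathbf{p}\in N_{\hat{\mathbf{p}}}$ there exists $\boldsymbol{\xi}_\mathbf{p}\in X$ with $\mathbf{h}(\boldsymbol{\xi}_\mathbf{p},\mathbf{p})=\mathbf{0}$ and $\mathbf{g}(\boldsymbol{\xi}_\mathbf{p},\mathbf{p})<\mathbf{0}$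 (strong Slater condition). Here $\nabla_\mathbf{x}$ and $\nabla_\mathbf{y}$ denote partial gradients with respect to the first argument ($\boldsymbol{\xi}$) and second argument ($\mathbf{p}$), respectively, and $[x_i^{\mathrm{cv}}]'(\hat{\mathbf{p}};\mathbf{d})$ is the directional derivative. *)

theory Defs
  imports "HOL-Analysis.Analysis"
begin

definition C1_fun :: "('a::real_normed_vector \<Rightarrow> real) \<Rightarrow> bool" where
  "C1_fun F \<longleftrightarrow> (\<exists>F'. (\<forall>z. (F has_derivative blinfun_apply (F' z)) (at z))
                      \<and> continuous_on UNIV F')"

text \<open>Implicit function convex relaxation:
  x_i^cv(p) = inf { xi_i | xi in [xL,xU], fcv(xi,p) <= 0 <= fcc(xi,p) },
  with value +infinity when infeasible.\<close>
definition xcv ::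
  "(real^'n \<Rightarrow> real^'m \<Rightarrow> real^'n) \<Rightarrow> (real^'n \<Rightarrow> real^'m \<Rightarrow> real^'n)
   \<Rightarrow> real^'n \<Rightarrow> real^'n \<Rightarrow> 'n \<Rightarrow> real^'m \<Rightarrow> ereal" where
  "xcv fcv fcc xL xU i p =
     Inf ((\<lambda>\<xi>. ereal (\<xi> $ i)) `
          {\<xi> \<in> cbox xL xU. \<forall>k. fcv \<xi> p $ k \<le> 0 \<and> 0 \<le> fcc \<xi> p $ k})"

definition has_dir_deriv :: "(real^'m \<Rightarrow> real) \<Rightarrow> real^'m \<Rightarrow> real^'m \<Rightarrow> real \<Rightarrow> bool" where
  "has_dir_deriv F p d D \<longleftrightarrow> ((\<lambda>t. (F (p + t *\<^sub>R d) - F p) / t) \<longlongrightarrow> D) (at_right 0)"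

end

theory Submission
  imports Defs
begin

text \<open>The relaxation \<open>x\<^sub>i\<^sup>c\<^sup>v(p)\<close> is the optimal value \<open>V(p)\<close> of a parametric convex program: its
  inequality constraints are the convex pieces of the relaxations and the box, its equality
  constraints are affine. The graph of the feasible-set map is convex, so \<open>V\<close> is convex; the
  Slater points make the feasible sets nonempty near \<open>phat\<close> and the box bounds \<open>V\<close>, so \<open>V\<close> is
  Lipschitz there. By the gradient inequality for the convex constraints, each difference
  quotient \<open>(V(phat + t d) - V(phat)) / t\<close> is the objective value of a feasible point of the
  linearized program at \<open>\<xi>hat\<close>. Conversely, a linearized feasible \<open>w\<close>, nudged towards a Slater
  point, satisfies every active constraint strictly to first order, so \<open>\<xi>hat + t w\<close> stays
  feasible for small \<open>t\<close> and the quotients are eventually at most \<open>w\<^sub>i + \<epsilon>\<close>. The linearized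
  program is an affine program bounded below (by the Lipschitz constant), so it attains its
  minimum, which is therefore the limit of the quotients.\<close>

section \<open>Difference quotients, tangents and Lipschitz bounds\<close>

lemma has_derivative_directional_quotient:
  fixes F :: "'a::real_normed_vector \<Rightarrow> real"
  assumes "(F has_derivative F') (at x)"
  shows "((\<lambda>t. (F (x + t *\<^sub>R v) - F x) / t) \<longlongrightarrow> F' v) (at_right 0)"
proof -
  have "((\<lambda>t. F (x + t *\<^sub>R v)) has_derivative (\<lambda>t. F' (t *\<^sub>R v))) (at 0)"
  proof -
    have "(F has_derivative F') (at (x + 0 *\<^sub>R v))"
      using assms by simp
    moreover have "((\<lambda>t. x + t *\<^sub>R v) has_derivative (\<lambda>t. t *\<^sub>R v)) (at 0)"
      by (auto intro!: derivative_eq_intros)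
    ultimately show ?thesis
      using has_derivative_compose[where f="\<lambda>t. x + t *\<^sub>R v" and g=F] by blast
  qed
  moreover have "(\<lambda>t. F' (t *\<^sub>R v)) = (*) (F' v)"
    using linear_cmul[OF has_derivative_linear[OF assms]] by (auto simp: mult.commute)
  ultimately have "((\<lambda>t. F (x + t *\<^sub>R v)) has_field_derivative F' v) (at 0)"
    by (simp add: has_field_derivative_def)
  then have "((\<lambda>t. (F (x + t *\<^sub>R v) - F x) / t) \<longlongrightarrow> F' v) (at 0)"
    by (simp add: has_field_derivative_iff)
  then show ?thesis
    by (rule tendsto_within_subset) simp
qed

lemma eventually_nonpos_along_direction:
  fixes F :: "'a::real_normed_vector \<Rightarrow> real"
  assumes deriv: "(F has_derivative F') (at x)" and "F x \<le> 0" and descent: "F x = 0 \<Longrightarrow> F' v < 0"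
  shows "eventually (\<lambda>t. F (x + t *\<^sub>R v) \<le> 0) (at_right 0)"
proof (cases "F x = 0")
  case True
  have "eventually (\<lambda>t. (F (x + t *\<^sub>R v) - F x) / t < 0) (at_right 0)"
    using order_tendstoD(2)[OF has_derivative_directional_quotient[OF deriv] descent[OF True]] .
  then show ?thesis
    using eventually_at_right_less[of 0]
    by eventually_elim (use True in \<open>auto simp: divide_less_0_iff\<close>)
next
  case False
  have "((\<lambda>t. x + t *\<^sub>R v) \<longlongrightarrow> x) (at_right (0::real))"
    by (auto intro!: tendsto_eq_intros)
  then have "((\<lambda>t. F (x + t *\<^sub>R v)) \<longlongrightarrow> F x) (at_right (0::real))"
    using has_derivative_continuous[OF deriv] isCont_tendsto_compose by blast
  moreover have "F x < 0"
    using False \<open>F x \<le> 0\<close> by simp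
  ultimately have "eventually (\<lambda>t. F (x + t *\<^sub>R v) < 0) (at_right 0)"
    by (rule order_tendstoD(2))
  then show ?thesis
    by (rule eventually_mono) simp
qed

lemma eventually_at_right_in_open:
  fixes p0 :: "'a::real_normed_vector"
  assumes "open U" "p0 \<in> U"
  shows "eventually (\<lambda>t. p0 + t *\<^sub>R d \<in> U) (at_right 0)"
proof -
  have "((\<lambda>t. p0 + t *\<^sub>R d) \<longlongrightarrow> p0) (at_right (0::real))"
    by (auto intro!: tendsto_eq_intros)
  then show ?thesis
    using assms by (rule topological_tendstoD)
qed

lemma convex_on_has_derivative_above_tangent:
  fixes F :: "'a::real_normed_vector \<Rightarrow> real"
  assumes convex: "convex_on S F" and deriv: "(F has_derivative F') (at x)"
    and "x \<in> S" "y \<in> S"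
  shows "F x + F' (y - x) \<le> F y"
proof -
  have "eventually (\<lambda>t. (F (x + t *\<^sub>R (y - x)) - F x) / t \<le> F y - F x) (at_right 0)"
    using eventually_at_right_real[of 0 1, OF zero_less_one]
  proof eventually_elim
    case (elim t)
    have "x + t *\<^sub>R (y - x) = (1 - t) *\<^sub>R x + t *\<^sub>R y"
      by (simp add: algebra_simps)
    then have "F (x + t *\<^sub>R (y - x)) - F x \<le> t * (F y - F x)"
      using convex_onD[OF convex, of t x y] elim \<open>x \<in> S\<close> \<open>y \<in> S\<close> by (auto simp: algebra_simps)
    then show ?case
      using elim by (simp add: divide_le_eq mult.commute)
  qed
  from tendsto_upperbound[OF has_derivative_directional_quotient[OF deriv] this]
  show ?thesis by simp
qed

text \<open>Extending the chord from \<open>x\<close> through \<open>y\<close> by length \<open>r\<close> stays in the doubled ball, so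
  convexity bounds the slope by \<open>2 M / r\<close>.\<close>
lemma convex_on_bounded_lipschitz_on_ball:
  fixes V :: "'a::real_normed_vector \<Rightarrow> real"
  assumes convex: "convex_on (ball c (2 * r)) V" and "0 < r"
    and bounded: "\<And>x. x \<in> ball c (2 * r) \<Longrightarrow> \<bar>V x\<bar> \<le> M"
    and "x \<in> ball c r" "y \<in> ball c r"
  shows "\<bar>V x - V y\<bar> \<le> (2 * M / r) * dist x y"
proof -
  have slope: "V y - V x \<le> (2 * M / r) * dist x y" if x: "x \<in> ball c r" and y: "y \<in> ball c r" for x y
  proof (cases "x = y")
    case False
    define \<delta> where "\<delta> = dist x y"
    have "0 < \<delta>" using False by (simp add: \<delta>_def)
    define z where "z = y + (r / \<delta>) *\<^sub>R (y - x)"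
    define \<theta> where "\<theta> = \<delta> / (\<delta> + r)"
    have "0 \<le> \<theta>" "\<theta> \<le> 1"
      using \<open>0 < \<delta>\<close> \<open>0 < r\<close> by (auto simp: \<theta>_def)
    have "dist y z = r"
      using \<open>0 < \<delta>\<close> \<open>0 < r\<close> by (simp add: z_def \<delta>_def dist_norm norm_minus_commute)
    then have z: "z \<in> ball c (2 * r)"
      using y dist_triangle[of c z y] by simp
    have x2: "x \<in> ball c (2 * r)" using x \<open>0 < r\<close> by simp
    have \<theta>: "\<theta> * (r / \<delta>) = 1 - \<theta>"
      using \<open>0 < \<delta>\<close> \<open>0 < r\<close> by (simp add: \<theta>_def field_simps)
    have "(1 - \<theta>) *\<^sub>R x + \<theta> *\<^sub>R z = (1 - \<theta>) *\<^sub>R x + \<theta> *\<^sub>R y + (\<theta> * (r / \<delta>)) *\<^sub>R (y - x)"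
      by (simp add: z_def algebra_simps)
    also have "\<dots> = y"
      unfolding \<theta> by (simp add: algebra_simps)
    finally have "(1 - \<theta>) *\<^sub>R x + \<theta> *\<^sub>R z = y" .
    then have "V y \<le> (1 - \<theta>) * V x + \<theta> * V z"
      using convex_onD[OF convex \<open>0 \<le> \<theta>\<close> \<open>\<theta> \<le> 1\<close> x2 z] by simp
    then have "V y - V x \<le> \<theta> * (V z - V x)" by (simp add: algebra_simps)
    also have "\<dots> \<le> \<theta> * (2 * M)"
      using bounded[OF x2] bounded[OF z] \<open>0 \<le> \<theta>\<close> by (intro mult_left_mono) auto
    also have "\<dots> \<le> (\<delta> / r) * (2 * M)"
      using bounded[OF x2] \<open>0 < \<delta>\<close> \<open>0 < r\<close>
      by (intro mult_right_mono) (auto simp: \<theta>_def frac_le)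
    finally show ?thesis by (simp add: \<delta>_def mult.commute)
  qed simp
  show ?thesis
    using slope[OF \<open>x \<in> ball c r\<close> \<open>y \<in> ball c r\<close>] slope[OF \<open>y \<in> ball c r\<close> \<open>x \<in> ball c r\<close>]
    by (simp add: dist_commute abs_le_iff)
qed

lemma has_derivative_affine:
  assumes "bounded_linear (\<lambda>z. h z - h 0)"
  shows "(h has_derivative (\<lambda>v. h v - h 0)) (at z)"
proof -
  have "((\<lambda>v. (h v - h 0) + h 0) has_derivative (\<lambda>v. h v - h 0)) (at z)"
    by (intro has_derivative_add_const bounded_linear_imp_has_derivative assms)
  then show ?thesis by simp
qed

lemma frechet_derivative_affine:
  "bounded_linear (\<lambda>z. h z - h 0) \<Longrightarrow> frechet_derivative h (at z) = (\<lambda>v. h v - h 0)"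
  by (rule frechet_derivative_at[symmetric]) (rule has_derivative_affine)

lemma frechet_derivative_uminus:
  assumes "F differentiable (at z)"
  shows "frechet_derivative (\<lambda>x. - F x) (at z) = (\<lambda>v. - frechet_derivative F (at z) v)"
  using assms by (intro frechet_derivative_at[symmetric] has_derivative_minus)
    (simp add: frechet_derivative_works)

lemma C1_fun_differentiable: "C1_fun F \<Longrightarrow> F differentiable (at z)"
  unfolding C1_fun_def differentiable_def by blast

section \<open>Affine programs attain their infimum\<close>

definition affine_function :: "('a::real_vector \<Rightarrow> real) \<Rightarrow> bool" where
  "affine_function h \<longleftrightarrow> (\<forall>x y t. h ((1 - t) *\<^sub>R x + t *\<^sub>R y) = (1 - t) * h x + t * h y)"

lemma affine_functionD: "affine_function h \<Longrightarrow> h ((1 - t) *\<^sub>R x + t *\<^sub>R y) = (1 - t) * h x + t * h y"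
  unfolding affine_function_def by blast

lemma affine_function_linear_plus_const:
  assumes "linear L"
  shows "affine_function (\<lambda>x. L x + b)"
  unfolding affine_function_def
proof (intro allI)
  fix x y and t :: real
  have "L ((1 - t) *\<^sub>R x + t *\<^sub>R y) = (1 - t) * L x + t * L y"
    by (simp only: linear_add[OF assms] linear_scale[OF assms] real_scaleR_def)
  then show "L ((1 - t) *\<^sub>R x + t *\<^sub>R y) + b = (1 - t) * (L x + b) + t * (L y + b)"
    by (simp add: algebra_simps)
qed

lemma affine_function_offset_linear: "linear (\<lambda>x. h x - h 0) \<Longrightarrow> affine_function h"
  using affine_function_linear_plus_const[of "\<lambda>x. h x - h 0" "h 0"] by simp

lemma affine_function_linear_slice:
  assumes "linear L"
  shows "affine_function (\<lambda>w. L (w, d))"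
proof -
  have "linear (\<lambda>w. (w, 0))"
    by (auto intro!: linearI)
  then have "affine_function (\<lambda>w. L (w, 0) + L (0, d))"
    using linear_compose[OF _ assms] by (intro affine_function_linear_plus_const) (simp add: o_def)
  moreover have "L (w, 0) + L (0, d) = L (w, d)" for w
    using linear_add[OF assms, of "(w, 0)" "(0, d)"] by simp
  ultimately show ?thesis
    by simp
qed

lemma convex_on_affine_function: "affine_function h \<Longrightarrow> convex S \<Longrightarrow> convex_on S h"
  by (intro convex_onI) (simp_all add: affine_functionD)

definition constraint_set :: "('a \<Rightarrow> real) set \<Rightarrow> ('a \<Rightarrow> real) set \<Rightarrow> 'a set" where
  "constraint_set K J = {x. (\<forall>h\<in>K. h x \<le> 0) \<and> (\<forall>h\<in>J. h x = 0)}"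

lemma convex_constraint_set:
  assumes "\<forall>h\<in>K \<union> J. affine_function h"
  shows "convex (constraint_set K J)"
  unfolding convex_alt
proof (intro ballI allI impI)
  fix x y and u :: real
  assume "x \<in> constraint_set K J" "y \<in> constraint_set K J" "0 \<le> u \<and> u \<le> 1"
  with assms show "(1 - u) *\<^sub>R x + u *\<^sub>R y \<in> constraint_set K J"
    by (auto simp: constraint_set_def affine_functionD intro!: convex_bound_le)
qed

lemma affine_function_bounded_below_constant:
  fixes g :: "'a::real_vector \<Rightarrow> real"
  assumes affine: "\<forall>h\<in>J. affine_function h" "affine_function g"
    and bounded: "\<forall>z\<in>constraint_set {} J. m \<le> g z"
    and "x \<in> constraint_set {} J" "y \<in> constraint_set {} J"
  shows "g x = g y"
proof -
  have "g a \<le> g b" if a: "a \<in> constraint_set {} J" and b: "b \<in> constraint_set {} J" for a b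
  proof (rule ccontr)
    assume "\<not> g a \<le> g b"
    define s where "s = (m - 1 - g a) / (g b - g a)"
    have "(1 - s) *\<^sub>R a + s *\<^sub>R b \<in> constraint_set {} J"
      using a b affine(1) by (auto simp: constraint_set_def affine_functionD)
    then have "m \<le> (1 - s) * g a + s * g b"
      using affine(2) bounded by (auto simp: affine_functionD)
    moreover have "(1 - s) * g a + s * g b = g a + s * (g b - g a)"
      by (simp add: algebra_simps)
    moreover have "s * (g b - g a) = m - 1 - g a"
      using \<open>\<not> g a \<le> g b\<close> by (simp add: s_def)
    ultimately show False by simp
  qed
  with assms(4,5) show ?thesis
    by (meson order.antisym)
qed

lemma affine_program_move_to_face:
  fixes g :: "'a::real_vector \<Rightarrow> real"
  assumes affine: "\<forall>h\<in>insert h0 (K \<union> J). affine_function h" "affine_function g"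
    and w': "w' \<in> constraint_set K J" "0 < h0 w'" "\<forall>w\<in>constraint_set (insert h0 K) J. g w' \<le> g w"
    and w: "w \<in> constraint_set (insert h0 K) J"
  shows "\<exists>z\<in>constraint_set K (insert h0 J). g z \<le> g w"
proof -
  define s where "s = h0 w / (h0 w - h0 w')"
  have "h0 w \<le> 0" using w by (simp add: constraint_set_def)
  then have "0 \<le> s" "s \<le> 1"
    using \<open>0 < h0 w'\<close> by (auto simp: s_def divide_le_eq zero_le_divide_iff)
  define z where "z = (1 - s) *\<^sub>R w + s *\<^sub>R w'"
  have "w \<in> constraint_set K J"
    using w by (simp add: constraint_set_def)
  then have "z \<in> constraint_set K J"
    unfolding z_def using affine \<open>0 \<le> s\<close> \<open>s \<le> 1\<close> w'(1)
    by (intro convexD_alt[OF convex_constraint_set]) auto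
  moreover have "h0 z = (1 - s) * h0 w + s * h0 w'"
    using affine by (simp add: z_def affine_functionD)
  then have "h0 z = 0"
    using \<open>h0 w \<le> 0\<close> \<open>0 < h0 w'\<close> by (simp add: s_def field_simps)
  moreover have "g z \<le> g w"
    using affine \<open>0 \<le> s\<close> \<open>s \<le> 1\<close> w'(3) w
    by (auto simp: z_def affine_functionD intro!: convex_bound_le)
  ultimately show ?thesis
    by (auto simp: constraint_set_def)
qed

text \<open>Either the program without \<open>h\<^sub>0\<close> has a minimiser with
  \<open>h\<^sub>0 \<le> 0\<close>, or some point with \<open>h\<^sub>0 > 0\<close> is at least as good as every feasible point, and
  moving feasible points towards it reduces the problem to the face \<open>h\<^sub>0 = 0\<close>.\<close>
lemma affine_program_attains_min:
  fixes g :: "'a::real_vector \<Rightarrow> real"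
  assumes "finite K" "\<forall>h\<in>K \<union> J. affine_function h" "affine_function g"
    and "constraint_set K J \<noteq> {}" "\<forall>x\<in>constraint_set K J. m \<le> g x"
  shows "\<exists>x\<in>constraint_set K J. \<forall>y\<in>constraint_set K J. g x \<le> g y"
  using assms
proof (induction K arbitrary: J m rule: finite_induct)
  case empty
  then obtain x where x: "x \<in> constraint_set {} J" by blast
  have "g x \<le> g y" if "y \<in> constraint_set {} J" for y
    using affine_function_bounded_below_constant[of J g m x y] empty.prems x that by simp
  with x show ?case by blast
next
  case (insert h0 K)
  let ?T = "constraint_set (insert h0 K) J" and ?T' = "constraint_set K J"
    and ?F = "constraint_set K (insert h0 J)"
  have sub: "?F \<subseteq> ?T" "?T \<subseteq> ?T'"
    by (auto simp: constraint_set_def)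
  have reduce: "\<exists>x\<in>?T. \<forall>y\<in>?T. g x \<le> g y"
    if w': "w' \<in> ?T'" "0 < h0 w'" "\<forall>w\<in>?T. g w' \<le> g w" for w'
  proof -
    have move: "\<exists>z\<in>?F. g z \<le> g w" if "w \<in> ?T" for w
      using affine_program_move_to_face[OF _ _ w' that] insert.prems(1,2) by auto
    then have "?F \<noteq> {}"
      using insert.prems(3) by blast
    then obtain x where x: "x \<in> ?F" "\<forall>y\<in>?F. g x \<le> g y"
      using insert.IH[of "insert h0 J" m] insert.prems sub by auto
    have "g x \<le> g y" if "y \<in> ?T" for y
      using move[OF that] x(2) by force
    with x(1) sub show ?thesis by blast
  qed
  show ?case
  proof (cases "\<exists>w'\<in>?T'. g w' < m")
    case True
    then obtain w' where "w' \<in> ?T'" "g w' < m" by blast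
    moreover from this have "0 < h0 w'"
      using insert.prems(4) by (force simp: constraint_set_def not_le)
    moreover have "\<forall>w\<in>?T. g w' \<le> g w"
      using \<open>g w' < m\<close> insert.prems(4) by force
    ultimately show ?thesis
      using reduce by blast
  next
    case False
    have "\<exists>x\<in>?T'. \<forall>y\<in>?T'. g x \<le> g y"
    proof (rule insert.IH[of J m])
      show "?T' \<noteq> {}" using insert.prems(3) sub(2) by blast
    qed (use insert.prems False in \<open>auto simp: not_less\<close>)
    then obtain x where x: "x \<in> ?T'" "\<forall>y\<in>?T'. g x \<le> g y" ..
    show ?thesis
    proof (cases "h0 x \<le> 0")
      case True
      then have "x \<in> ?T" using x(1) by (simp add: constraint_set_def)
      with x(2) sub show ?thesis by blast
    next
      case False
      moreover have "\<forall>w\<in>?T. g x \<le> g w"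
        using x(2) sub by blast
      ultimately show ?thesis
        using reduce[OF x(1)] by simp
    qed
  qed
qed

section \<open>Parametric convex programs\<close>

definition feasible_set :: "('x \<times> 'p \<Rightarrow> real) set \<Rightarrow> ('x \<times> 'p \<Rightarrow> real) set \<Rightarrow> 'p \<Rightarrow> 'x set" where
  "feasible_set G E p = {\<xi>. (\<xi>, p) \<in> constraint_set G E}"

lemma mem_feasible_set:
  "\<xi> \<in> feasible_set G E p \<longleftrightarrow> (\<forall>g\<in>G. g (\<xi>, p) \<le> 0) \<and> (\<forall>h\<in>E. h (\<xi>, p) = 0)"
  by (simp add: feasible_set_def constraint_set_def)

text \<open>A junk value unless the feasible set is nonempty and compact, as it is on \<open>U\<close> below.\<close>
definition optimal_value ::
    "('x \<Rightarrow> real) \<Rightarrow> ('x \<times> 'p \<Rightarrow> real) set \<Rightarrow> ('x \<times> 'p \<Rightarrow> real) set \<Rightarrow> 'p \<Rightarrow> real" where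
  "optimal_value c G E p = Inf (c ` feasible_set G E p)"

lemma optimal_value_eqI:
  "\<xi> \<in> feasible_set G E p \<Longrightarrow> (\<And>\<eta>. \<eta> \<in> feasible_set G E p \<Longrightarrow> c \<xi> \<le> c \<eta>) \<Longrightarrow>
    optimal_value c G E p = c \<xi>"
  unfolding optimal_value_def by (rule cInf_eq_minimum) auto

definition linearized_set ::
    "('x::real_normed_vector \<times> 'p::real_normed_vector \<Rightarrow> real) set \<Rightarrow> ('x \<times> 'p \<Rightarrow> real) set
      \<Rightarrow> 'x \<times> 'p \<Rightarrow> 'p \<Rightarrow> 'x set" where
  "linearized_set G E z d = constraint_set
     ((\<lambda>g w. frechet_derivative g (at z) (w, d)) ` {g \<in> G. g z = 0})
     ((\<lambda>h w. frechet_derivative h (at z) (w, d)) ` E)"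

lemma mem_linearized_set:
  "w \<in> linearized_set G E z d \<longleftrightarrow>
    (\<forall>g\<in>G. g z = 0 \<longrightarrow> frechet_derivative g (at z) (w, d) \<le> 0)
    \<and> (\<forall>h\<in>E. frechet_derivative h (at z) (w, d) = 0)"
  by (auto simp: linearized_set_def constraint_set_def)

locale parametric_convex_program =
  fixes G E :: "('x::euclidean_space \<times> 'p::real_normed_vector \<Rightarrow> real) set"
    and X :: "'x set" and P U :: "'p set"
  assumes finite_ineqs: "finite G"
    and convex_ineqs: "g \<in> G \<Longrightarrow> convex_on (X \<times> P) g"
    and differentiable_ineqs: "g \<in> G \<Longrightarrow> g differentiable (at z)"
    and affine_eqs: "h \<in> E \<Longrightarrow> bounded_linear (\<lambda>z. h z - h 0)"
    and bounded_X: "bounded X"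
    and feasible_subset_X: "feasible_set G E p \<subseteq> X"
    and open_U: "open U" and U_subset_P: "U \<subseteq> P"
    and slater: "p \<in> U \<Longrightarrow> \<exists>\<xi>. (\<forall>g\<in>G. g (\<xi>, p) < 0) \<and> (\<forall>h\<in>E. h (\<xi>, p) = 0)"
begin

lemma has_derivative_ineqs: "g \<in> G \<Longrightarrow> (g has_derivative frechet_derivative g (at z)) (at z)"
  using differentiable_ineqs frechet_derivative_works by blast

lemma eqs_increment: "h \<in> E \<Longrightarrow> h (z + v) = h z + frechet_derivative h (at y) v"
  using linear_add[OF bounded_linear.linear[OF affine_eqs], of h z v]
  by (simp add: frechet_derivative_affine[OF affine_eqs])

lemma affine_function_eqs: "h \<in> E \<Longrightarrow> affine_function h"
  using affine_function_offset_linear bounded_linear.linear[OF affine_eqs] by blast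

lemma closed_feasible_set: "closed (feasible_set G E p)"
proof -
  have "continuous_on UNIV g" if "g \<in> G \<union> E" for g
  proof (cases "g \<in> G")
    case True
    then show ?thesis
      by (intro differentiable_imp_continuous_on) (auto simp: differentiable_on_def differentiable_ineqs)
  next
    case False
    then have "continuous_on UNIV (\<lambda>z. (g z - g 0) + g 0)"
      using that by (intro continuous_intros linear_continuous_on affine_eqs) auto
    then show ?thesis by simp
  qed
  then have "closed (constraint_set G E)"
    unfolding constraint_set_def Collect_conj_eq Collect_ball_eq
    by (intro closed_Int closed_INT) (auto intro!: closed_Collect_le closed_Collect_eq)
  then show ?thesis
    unfolding feasible_set_def vimage_def[symmetric]
    by (rule continuous_closed_vimage) (intro continuous_intros)
qed

lemma compact_feasible_set: "compact (feasible_set G E p)"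
  using closed_feasible_set bounded_subset[OF bounded_X feasible_subset_X]
  by (simp add: compact_eq_bounded_closed)

lemma feasible_set_nonempty: "p \<in> U \<Longrightarrow> feasible_set G E p \<noteq> {}"
  using slater by (force simp: mem_feasible_set less_imp_le)

lemma feasible_set_convex_combination:
  assumes "p \<in> P" "q \<in> P" "\<xi> \<in> feasible_set G E p" "\<eta> \<in> feasible_set G E q" "0 \<le> t" "t \<le> 1"
  shows "(1 - t) *\<^sub>R \<xi> + t *\<^sub>R \<eta> \<in> feasible_set G E ((1 - t) *\<^sub>R p + t *\<^sub>R q)"
  unfolding mem_feasible_set
proof (intro conjI ballI)
  have "(\<xi>, p) \<in> X \<times> P" "(\<eta>, q) \<in> X \<times> P"
    using assms feasible_subset_X by auto
  fix g assume "g \<in> G"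
  then have "g ((1 - t) *\<^sub>R (\<xi>, p) + t *\<^sub>R (\<eta>, q)) \<le> (1 - t) * g (\<xi>, p) + t * g (\<eta>, q)"
    using convex_onD[OF convex_ineqs] assms \<open>(\<xi>, p) \<in> X \<times> P\<close> \<open>(\<eta>, q) \<in> X \<times> P\<close> by blast
  also have "\<dots> \<le> 0"
    using assms \<open>g \<in> G\<close> by (intro convex_bound_le) (auto simp: mem_feasible_set)
  finally show "g ((1 - t) *\<^sub>R \<xi> + t *\<^sub>R \<eta>, (1 - t) *\<^sub>R p + t *\<^sub>R q) \<le> 0"
    by simp
next
  fix h assume "h \<in> E"
  then have "h ((1 - t) *\<^sub>R (\<xi>, p) + t *\<^sub>R (\<eta>, q)) = (1 - t) * h (\<xi>, p) + t * h (\<eta>, q)"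
    by (intro affine_functionD affine_function_eqs)
  moreover have "h (\<xi>, p) = 0" "h (\<eta>, q) = 0"
    using assms(3,4) \<open>h \<in> E\<close> by (auto simp: mem_feasible_set)
  ultimately show "h ((1 - t) *\<^sub>R \<xi> + t *\<^sub>R \<eta>, (1 - t) *\<^sub>R p + t *\<^sub>R q) = 0"
    by simp
qed

lemma linear_frechet_derivative_eqs:
  assumes "h \<in> E"
  shows "linear (frechet_derivative h (at z))"
  unfolding frechet_derivative_affine[OF affine_eqs[OF assms]]
  using bounded_linear.linear[OF affine_eqs[OF assms]] .

lemma optimal_value_le:
  assumes "linear c" "\<xi> \<in> feasible_set G E p"
  shows "optimal_value c G E p \<le> c \<xi>"
proof -
  have "compact (c ` feasible_set G E p)"
    using assms(1) compact_feasible_set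
    by (intro compact_continuous_image linear_continuous_on) (simp_all add: linear_conv_bounded_linear)
  then show ?thesis
    unfolding optimal_value_def using assms(2)
    by (intro cInf_lower) (auto intro: bounded_imp_bdd_below compact_imp_bounded)
qed

lemma optimal_value_attained:
  assumes "linear c" "p \<in> U"
  obtains \<xi> where "\<xi> \<in> feasible_set G E p" "c \<xi> = optimal_value c G E p"
proof -
  have "compact (c ` feasible_set G E p)"
    using assms(1) compact_feasible_set
    by (intro compact_continuous_image linear_continuous_on) (simp_all add: linear_conv_bounded_linear)
  then have "optimal_value c G E p \<in> c ` feasible_set G E p"
    unfolding optimal_value_def using feasible_set_nonempty[OF assms(2)]
    by (intro closed_contains_Inf) (auto intro: bounded_imp_bdd_below compact_imp_bounded compact_imp_closed)
  then show ?thesis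
    using that by force
qed

lemma convex_on_optimal_value:
  assumes "linear c" "convex K" "K \<subseteq> U"
  shows "convex_on K (optimal_value c G E)"
proof (rule convex_onI[OF _ \<open>convex K\<close>])
  fix t :: real and p q
  assume "0 < t" "t < 1" "p \<in> K" "q \<in> K"
  obtain \<xi> \<eta> where \<xi>: "\<xi> \<in> feasible_set G E p" "c \<xi> = optimal_value c G E p"
    and \<eta>: "\<eta> \<in> feasible_set G E q" "c \<eta> = optimal_value c G E q"
    using optimal_value_attained[OF \<open>linear c\<close>] \<open>p \<in> K\<close> \<open>q \<in> K\<close> assms(3) by (metis subsetD)
  have "(1 - t) *\<^sub>R \<xi> + t *\<^sub>R \<eta> \<in> feasible_set G E ((1 - t) *\<^sub>R p + t *\<^sub>R q)"
    using \<open>0 < t\<close> \<open>t < 1\<close> \<open>p \<in> K\<close> \<open>q \<in> K\<close> assms(3) U_subset_P \<xi>(1) \<eta>(1)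
    by (intro feasible_set_convex_combination) auto
  then have "optimal_value c G E ((1 - t) *\<^sub>R p + t *\<^sub>R q) \<le> c ((1 - t) *\<^sub>R \<xi> + t *\<^sub>R \<eta>)"
    by (rule optimal_value_le[OF \<open>linear c\<close>])
  also have "\<dots> = (1 - t) * optimal_value c G E p + t * optimal_value c G E q"
    using \<xi>(2) \<eta>(2) by (simp add: linear_add[OF \<open>linear c\<close>] linear_scale[OF \<open>linear c\<close>])
  finally show "optimal_value c G E ((1 - t) *\<^sub>R p + t *\<^sub>R q)
      \<le> (1 - t) * optimal_value c G E p + t * optimal_value c G E q" .
qed

lemma bounded_optimal_value:
  assumes "linear c"
  obtains M where "\<And>p. p \<in> U \<Longrightarrow> \<bar>optimal_value c G E p\<bar> \<le> M"
proof -
  have "bounded (c ` X)"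
    using assms bounded_X by (intro bounded_linear_image) (simp_all add: linear_conv_bounded_linear)
  then obtain M where M: "\<And>\<xi>. \<xi> \<in> X \<Longrightarrow> \<bar>c \<xi>\<bar> \<le> M"
    by (auto simp: bounded_real)
  have "\<bar>optimal_value c G E p\<bar> \<le> M" if "p \<in> U" for p
    using optimal_value_attained[OF assms that] M feasible_subset_X by (metis subsetD)
  with that show ?thesis by blast
qed

lemma optimal_value_locally_lipschitz:
  assumes "linear c" "p0 \<in> U"
  obtains e L where "0 < e" "ball p0 e \<subseteq> U"
    "\<And>p q. p \<in> ball p0 e \<Longrightarrow> q \<in> ball p0 e \<Longrightarrow>
      \<bar>optimal_value c G E p - optimal_value c G E q\<bar> \<le> L * dist p q"
proof -
  obtain r where "0 < r" and ball: "ball p0 (2 * r) \<subseteq> U"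
    using open_contains_ball[of U] open_U assms(2) by (metis field_sum_of_halves half_gt_zero mult_2)
  obtain M where M: "\<And>p. p \<in> U \<Longrightarrow> \<bar>optimal_value c G E p\<bar> \<le> M"
    using bounded_optimal_value[OF assms(1)] by blast
  have "convex_on (ball p0 (2 * r)) (optimal_value c G E)"
    using assms(1) ball by (rule convex_on_optimal_value[OF _ convex_ball])
  from convex_on_bounded_lipschitz_on_ball[OF this \<open>0 < r\<close> M]
  show ?thesis
    using \<open>0 < r\<close> ball by (intro that[of r "2 * M / r"]) (auto simp: subset_eq)
qed

lemma difference_quotient_in_linearized_set:
  assumes "p0 \<in> P" "\<xi>0 \<in> feasible_set G E p0" "0 < t" "p0 + t *\<^sub>R d \<in> P"
    and "\<xi> \<in> feasible_set G E (p0 + t *\<^sub>R d)"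
  shows "(1 / t) *\<^sub>R (\<xi> - \<xi>0) \<in> linearized_set G E (\<xi>0, p0) d"
proof -
  let ?z0 = "(\<xi>0, p0)" and ?w = "(1 / t) *\<^sub>R (\<xi> - \<xi>0)"
  have step: "(\<xi>, p0 + t *\<^sub>R d) = ?z0 + t *\<^sub>R (?w, d)"
    using \<open>0 < t\<close> by simp
  have "?z0 + t *\<^sub>R (?w, d) \<in> X \<times> P" "?z0 \<in> X \<times> P"
    unfolding step[symmetric] using assms feasible_subset_X by auto
  show ?thesis
    unfolding mem_linearized_set
  proof (intro conjI ballI impI)
    fix g assume "g \<in> G" "g ?z0 = 0"
    let ?D = "frechet_derivative g (at ?z0)"
    have "g ?z0 + ?D (t *\<^sub>R (?w, d)) \<le> g (?z0 + t *\<^sub>R (?w, d))"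
      using convex_on_has_derivative_above_tangent[OF convex_ineqs has_derivative_ineqs]
        \<open>g \<in> G\<close> \<open>?z0 + t *\<^sub>R (?w, d) \<in> X \<times> P\<close> \<open>?z0 \<in> X \<times> P\<close>
      by (metis add_diff_cancel_left')
    moreover have "g (?z0 + t *\<^sub>R (?w, d)) \<le> 0"
      using assms(5) \<open>g \<in> G\<close> unfolding step[symmetric] by (simp add: mem_feasible_set)
    moreover have "?D (t *\<^sub>R (?w, d)) = t * ?D (?w, d)"
      by (subst linear_scale[OF has_derivative_linear[OF has_derivative_ineqs[OF \<open>g \<in> G\<close>]]]) simp
    ultimately have "t * ?D (?w, d) \<le> 0"
      using \<open>g ?z0 = 0\<close> by linarith
    then show "?D (?w, d) \<le> 0"
      using \<open>0 < t\<close> by (simp add: mult_le_0_iff)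
  next
    fix h assume "h \<in> E"
    let ?D = "frechet_derivative h (at ?z0)"
    have "h (?z0 + t *\<^sub>R (?w, d)) = h ?z0 + ?D (t *\<^sub>R (?w, d))"
      by (rule eqs_increment[OF \<open>h \<in> E\<close>])
    moreover have "h (?z0 + t *\<^sub>R (?w, d)) = 0" "h ?z0 = 0"
      using assms(2,5) \<open>h \<in> E\<close> unfolding step[symmetric] by (simp_all add: mem_feasible_set)
    moreover have "?D (t *\<^sub>R (?w, d)) = t * ?D (?w, d)"
      by (subst linear_scale[OF linear_frechet_derivative_eqs[OF \<open>h \<in> E\<close>]]) simp
    ultimately have "t * ?D (?w, d) = 0"
      by linarith
    then show "?D (?w, d) = 0"
      using \<open>0 < t\<close> by simp
  qed
qed

lemma derivative_towards_slater_point_neg: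
  assumes "g \<in> G" "p0 \<in> P" "\<xi>0 \<in> feasible_set G E p0" "\<xi>s \<in> feasible_set G E p0"
    and "g (\<xi>0, p0) = 0" "g (\<xi>s, p0) < 0"
  shows "frechet_derivative g (at (\<xi>0, p0)) (\<xi>s - \<xi>0, 0) < 0"
proof -
  have "(\<xi>0, p0) \<in> X \<times> P" "(\<xi>s, p0) \<in> X \<times> P"
    using assms(2-4) feasible_subset_X by auto
  then have "g (\<xi>0, p0) + frechet_derivative g (at (\<xi>0, p0)) ((\<xi>s, p0) - (\<xi>0, p0)) \<le> g (\<xi>s, p0)"
    by (rule convex_on_has_derivative_above_tangent[OF convex_ineqs[OF assms(1)]
          has_derivative_ineqs[OF assms(1)]])
  with assms(5,6) show ?thesis
    by simp
qed

text \<open>Moving a little towards a Slater point makes every active linearized inequality strict,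
  so that the perturbed direction is feasible to first order and hence for small steps.\<close>
lemma eventually_feasible_along_perturbed_direction:
  assumes "p0 \<in> P" "\<xi>0 \<in> feasible_set G E p0"
    and slater_point: "\<forall>g\<in>G. g (\<xi>s, p0) < 0" "\<forall>h\<in>E. h (\<xi>s, p0) = 0"
    and w: "w \<in> linearized_set G E (\<xi>0, p0) d" and "0 < \<delta>"
  shows "eventually (\<lambda>t. \<xi>0 + t *\<^sub>R (w + \<delta> *\<^sub>R (\<xi>s - \<xi>0)) \<in> feasible_set G E (p0 + t *\<^sub>R d))
    (at_right 0)"
proof -
  let ?z0 = "(\<xi>0, p0)" and ?v = "(w + \<delta> *\<^sub>R (\<xi>s - \<xi>0), d)"
  have v: "?v = (w, d) + \<delta> *\<^sub>R (\<xi>s - \<xi>0, 0)"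
    by simp
  have pt: "(\<xi>0 + t *\<^sub>R (w + \<delta> *\<^sub>R (\<xi>s - \<xi>0)), p0 + t *\<^sub>R d) = ?z0 + t *\<^sub>R ?v" for t
    by simp
  have "\<xi>s \<in> feasible_set G E p0"
    using slater_point by (auto simp: mem_feasible_set less_imp_le)
  have ineq: "eventually (\<lambda>t. g (?z0 + t *\<^sub>R ?v) \<le> 0) (at_right 0)" if "g \<in> G" for g
  proof (rule eventually_nonpos_along_direction[OF has_derivative_ineqs[OF that]])
    show "g ?z0 \<le> 0"
      using assms(2) that by (simp add: mem_feasible_set)
    let ?D = "frechet_derivative g (at ?z0)"
    assume "g ?z0 = 0"
    then have "?D (\<xi>s - \<xi>0, 0) < 0"
      using derivative_towards_slater_point_neg[OF that assms(1,2) \<open>\<xi>s \<in> feasible_set G E p0\<close>]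
        slater_point(1) that by blast
    moreover have "?D (w, d) \<le> 0"
      using w that \<open>g ?z0 = 0\<close> by (simp add: mem_linearized_set)
    moreover have "linear ?D"
      using has_derivative_linear[OF has_derivative_ineqs[OF that]] .
    then have "?D ?v = ?D (w, d) + \<delta> * ?D (\<xi>s - \<xi>0, 0)"
      unfolding v by (simp only: linear_add linear_scale real_scaleR_def)
    ultimately show "?D ?v < 0"
      using \<open>0 < \<delta>\<close> by (smt (verit) mult_pos_neg)
  qed
  have eq: "h (?z0 + t *\<^sub>R ?v) = 0" if "h \<in> E" for h t
  proof -
    let ?D = "frechet_derivative h (at ?z0)"
    have lin: "linear ?D"
      using linear_frechet_derivative_eqs[OF that] .
    have "h ?z0 = 0" "h (?z0 + (\<xi>s - \<xi>0, 0)) = 0"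
      using assms(2) slater_point(2) that by (simp_all add: mem_feasible_set)
    then have "?D (\<xi>s - \<xi>0, 0) = 0"
      using eqs_increment[OF that, of ?z0 "(\<xi>s - \<xi>0, 0)" ?z0] by simp
    moreover have "?D (w, d) = 0"
      using w that by (simp add: mem_linearized_set)
    ultimately have "?D (t *\<^sub>R ?v) = 0"
      unfolding v linear_add[OF lin] linear_scale[OF lin] by simp
    then show ?thesis
      using eqs_increment[OF that, of ?z0 "t *\<^sub>R ?v" ?z0] \<open>h ?z0 = 0\<close> by simp
  qed
  have "eventually (\<lambda>t. \<forall>g\<in>G. g (?z0 + t *\<^sub>R ?v) \<le> 0) (at_right 0)"
    using finite_ineqs ineq by (intro eventually_ball_finite) auto
  then show ?thesis
    unfolding mem_feasible_set pt using eq by simp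
qed

lemma eventually_quotient_linearized_value:
  assumes "linear c" "p0 \<in> U" "\<xi>0 \<in> feasible_set G E p0" "c \<xi>0 = optimal_value c G E p0"
  shows "eventually (\<lambda>t. \<exists>w\<in>linearized_set G E (\<xi>0, p0) d.
    c w = (optimal_value c G E (p0 + t *\<^sub>R d) - optimal_value c G E p0) / t) (at_right 0)"
  using eventually_at_right_in_open[OF open_U assms(2), where d = d] eventually_at_right_less[of 0]
proof eventually_elim
  case (elim t)
  obtain \<xi> where \<xi>: "\<xi> \<in> feasible_set G E (p0 + t *\<^sub>R d)" "c \<xi> = optimal_value c G E (p0 + t *\<^sub>R d)"
    using optimal_value_attained[OF assms(1) elim(1)] .
  have "(1 / t) *\<^sub>R (\<xi> - \<xi>0) \<in> linearized_set G E (\<xi>0, p0) d"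
    using assms(2,3) elim U_subset_P \<xi>(1) by (intro difference_quotient_in_linearized_set) auto
  moreover have "c ((1 / t) *\<^sub>R (\<xi> - \<xi>0)) = (optimal_value c G E (p0 + t *\<^sub>R d) - optimal_value c G E p0) / t"
    using \<xi>(2) assms(4) by (simp add: linear_scale[OF assms(1)] linear_diff[OF assms(1)])
  ultimately show ?case by blast
qed

lemma optimal_value_quotient_le:
  assumes "linear c" "p0 \<in> U" "\<xi>0 \<in> feasible_set G E p0" "c \<xi>0 = optimal_value c G E p0"
    and "w \<in> linearized_set G E (\<xi>0, p0) d" "0 < \<epsilon>"
  shows "eventually (\<lambda>t. (optimal_value c G E (p0 + t *\<^sub>R d) - optimal_value c G E p0) / t \<le> c w + \<epsilon>)
    (at_right 0)"
proof -
  obtain \<xi>s where \<xi>s: "\<forall>g\<in>G. g (\<xi>s, p0) < 0" "\<forall>h\<in>E. h (\<xi>s, p0) = 0"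
    using slater[OF assms(2)] by blast
  define \<delta> where "\<delta> = \<epsilon> / (1 + \<bar>c (\<xi>s - \<xi>0)\<bar>)"
  have "0 < \<delta>"
    using \<open>0 < \<epsilon>\<close> by (simp add: \<delta>_def add_pos_nonneg)
  have "\<delta> * c (\<xi>s - \<xi>0) \<le> \<delta> * (1 + \<bar>c (\<xi>s - \<xi>0)\<bar>)"
    using \<open>0 < \<delta>\<close> by (intro mult_left_mono) auto
  then have \<delta>_small: "\<delta> * c (\<xi>s - \<xi>0) \<le> \<epsilon>"
    by (simp add: \<delta>_def add_pos_nonneg)
  have "eventually (\<lambda>t. \<xi>0 + t *\<^sub>R (w + \<delta> *\<^sub>R (\<xi>s - \<xi>0)) \<in> feasible_set G E (p0 + t *\<^sub>R d))
      (at_right 0)"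
    using assms(2,3,5) U_subset_P \<xi>s \<open>0 < \<delta>\<close> by (intro eventually_feasible_along_perturbed_direction) auto
  then show ?thesis
    using eventually_at_right_less[of 0]
  proof eventually_elim
    case (elim t)
    let ?w = "w + \<delta> *\<^sub>R (\<xi>s - \<xi>0)"
    have "optimal_value c G E (p0 + t *\<^sub>R d) \<le> c (\<xi>0 + t *\<^sub>R ?w)"
      using optimal_value_le[OF assms(1) elim(1)] .
    also have "\<dots> = optimal_value c G E p0 + t * (c w + \<delta> * c (\<xi>s - \<xi>0))"
      using assms(4) by (simp add: linear_add[OF assms(1)] linear_scale[OF assms(1)])
    finally have "optimal_value c G E (p0 + t *\<^sub>R d) - optimal_value c G E p0 \<le> t * (c w + \<epsilon>)"
      using \<delta>_small \<open>0 < t\<close> by (smt (verit) mult_left_mono)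
    then show ?case
      using \<open>0 < t\<close> by (simp add: divide_le_eq mult.commute)
  qed
qed

lemma linearized_set_attains_min:
  fixes c :: "'x \<Rightarrow> real"
  assumes "linear c" "linearized_set G E z d \<noteq> {}" "\<forall>w\<in>linearized_set G E z d. m \<le> c w"
  shows "\<exists>w\<in>linearized_set G E z d. \<forall>w'\<in>linearized_set G E z d. c w \<le> c w'"
proof -
  have "affine_function (\<lambda>w. frechet_derivative g (at z) (w, d))" if "g \<in> G \<union> E" for g
    using that has_derivative_linear[OF has_derivative_ineqs] linear_frechet_derivative_eqs
    by (intro affine_function_linear_slice) blast
  moreover have "affine_function c"
    using affine_function_linear_plus_const[OF assms(1), of 0] by simp
  ultimately show ?thesis
    using assms finite_ineqs unfolding linearized_set_def
    by (intro affine_program_attains_min) auto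
qed

lemma linearized_set_bounded_below:
  assumes "linear c" "p0 \<in> U" "\<xi>0 \<in> feasible_set G E p0" "c \<xi>0 = optimal_value c G E p0"
  obtains m where "\<And>w. w \<in> linearized_set G E (\<xi>0, p0) d \<Longrightarrow> m \<le> c w"
proof -
  let ?V = "optimal_value c G E"
  obtain e L where "0 < e" "ball p0 e \<subseteq> U" and lipschitz:
    "\<And>p q. p \<in> ball p0 e \<Longrightarrow> q \<in> ball p0 e \<Longrightarrow> \<bar>?V p - ?V q\<bar> \<le> L * dist p q"
    using optimal_value_locally_lipschitz[OF assms(1,2)] by blast
  have "- (L * norm d) - 1 \<le> c w" if w: "w \<in> linearized_set G E (\<xi>0, p0) d" for w
  proof -
    have "eventually (\<lambda>t. p0 + t *\<^sub>R d \<in> ball p0 e) (at_right 0)"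
      using \<open>0 < e\<close> by (intro eventually_at_right_in_open) auto
    then have "eventually (\<lambda>t. - (L * norm d) \<le> (?V (p0 + t *\<^sub>R d) - ?V p0) / t) (at_right 0)"
      using eventually_at_right_less[of 0]
    proof eventually_elim
      case (elim t)
      have "\<bar>?V (p0 + t *\<^sub>R d) - ?V p0\<bar> \<le> L * dist (p0 + t *\<^sub>R d) p0"
        using lipschitz[OF elim(1), of p0] \<open>0 < e\<close> by simp
      also have "dist (p0 + t *\<^sub>R d) p0 = t * norm d"
        using \<open>0 < t\<close> by (simp add: dist_norm)
      finally have "t * (- (L * norm d)) \<le> ?V (p0 + t *\<^sub>R d) - ?V p0"
        by (simp add: algebra_simps abs_le_iff)
      then show ?case
        using \<open>0 < t\<close> by (simp add: le_divide_eq mult.commute)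
    qed
    moreover have "eventually (\<lambda>t. (?V (p0 + t *\<^sub>R d) - ?V p0) / t \<le> c w + 1) (at_right 0)"
      using optimal_value_quotient_le[OF assms w zero_less_one] .
    ultimately have "eventually (\<lambda>t. - (L * norm d) \<le> (?V (p0 + t *\<^sub>R d) - ?V p0) / t
        \<and> (?V (p0 + t *\<^sub>R d) - ?V p0) / t \<le> c w + 1) (at_right 0)"
      by (rule eventually_conj)
    then show ?thesis
      using eventually_happens'[OF trivial_limit_at_right_real] by fastforce
  qed
  with that show ?thesis by blast
qed

theorem optimal_value_directional_derivative:
  fixes c :: "'x \<Rightarrow> real"
  assumes "linear c" "p0 \<in> U" "\<xi>0 \<in> feasible_set G E p0" "\<forall>\<xi>\<in>feasible_set G E p0. c \<xi>0 \<le> c \<xi>"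
  shows "\<exists>w\<in>linearized_set G E (\<xi>0, p0) d. (\<forall>w'\<in>linearized_set G E (\<xi>0, p0) d. c w \<le> c w') \<and>
    ((\<lambda>t. (optimal_value c G E (p0 + t *\<^sub>R d) - optimal_value c G E p0) / t) \<longlongrightarrow> c w) (at_right 0)"
proof -
  let ?V = "optimal_value c G E" and ?L = "linearized_set G E (\<xi>0, p0) d"
  let ?q = "\<lambda>t. (?V (p0 + t *\<^sub>R d) - ?V p0) / t"
  have V0: "c \<xi>0 = ?V p0"
    using assms(3,4) by (intro optimal_value_eqI[symmetric]) auto
  have quotient_attained: "eventually (\<lambda>t. \<exists>w\<in>?L. c w = ?q t) (at_right 0)"
    using eventually_quotient_linearized_value[OF assms(1-3) V0] .
  then have "?L \<noteq> {}"
    using eventually_happens'[OF trivial_limit_at_right_real] by blast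
  moreover obtain m where "\<And>w. w \<in> ?L \<Longrightarrow> m \<le> c w"
    using linearized_set_bounded_below[OF assms(1-3) V0] by blast
  ultimately obtain w where w: "w \<in> ?L" "\<forall>w'\<in>?L. c w \<le> c w'"
    using linearized_set_attains_min[OF assms(1)] by blast
  have "(?q \<longlongrightarrow> c w) (at_right 0)"
  proof (rule order_tendstoI)
    fix a assume "a < c w"
    show "eventually (\<lambda>t. a < ?q t) (at_right 0)"
      using quotient_attained
    proof eventually_elim
      case (elim t)
      then obtain w' where "w' \<in> ?L" "c w' = ?q t" by blast
      with w(2) \<open>a < c w\<close> show ?case by fastforce
    qed
  next
    fix a assume "c w < a"
    then have "eventually (\<lambda>t. ?q t \<le> c w + (a - c w) / 2) (at_right 0)"
      by (intro optimal_value_quotient_le[OF assms(1-3) V0 w(1)]) simp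
    moreover have "c w + (a - c w) / 2 < a"
      using \<open>c w < a\<close> by (simp add: field_simps)
    ultimately show "eventually (\<lambda>t. ?q t < a) (at_right 0)"
      by (auto elim: eventually_mono intro: le_less_trans)
  qed
  with w show ?thesis by blast
qed

end

section \<open>The nonlinear program of the implicit relaxation\<close>

definition relaxation_ineqs ::
    "'n set \<Rightarrow> ('n \<Rightarrow> nat) \<Rightarrow> ('n \<Rightarrow> nat) \<Rightarrow> ('n \<Rightarrow> nat \<Rightarrow> real^'n \<Rightarrow> 'p \<Rightarrow> real)
      \<Rightarrow> ('n \<Rightarrow> nat \<Rightarrow> real^'n \<Rightarrow> 'p \<Rightarrow> real) \<Rightarrow> real^'n \<Rightarrow> real^'n \<Rightarrow> ((real^'n) \<times> 'p \<Rightarrow> real) set" where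
  "relaxation_ineqs H ncv ncc \<phi> \<psi> xL xU =
     (\<lambda>(k, j) (z, q). \<phi> k j z q) ` {(k, j). k \<in> - H \<and> j < ncv k}
   \<union> (\<lambda>(k, j) (z, q). - \<psi> k j z q) ` {(k, j). k \<in> - H \<and> j < ncc k}
   \<union> range (\<lambda>m (z, q). xL $ m - z $ m) \<union> range (\<lambda>m (z, q). z $ m - xU $ m)"

definition relaxation_eqs :: "(real^'n \<Rightarrow> 'p \<Rightarrow> real^'n) \<Rightarrow> 'n set \<Rightarrow> ((real^'n) \<times> 'p \<Rightarrow> real) set" where
  "relaxation_eqs f H = (\<lambda>k (z, q). f z q $ k) ` H"

lemma mem_relaxation_feasible_set:
  "\<xi> \<in> feasible_set (relaxation_ineqs H ncv ncc \<phi> \<psi> xL xU) (relaxation_eqs f H) p \<longleftrightarrow>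
    (\<forall>k\<in>H. f \<xi> p $ k = 0) \<and> (\<forall>k\<in>-H. \<forall>j<ncv k. \<phi> k j \<xi> p \<le> 0)
    \<and> (\<forall>k\<in>-H. \<forall>j<ncc k. - \<psi> k j \<xi> p \<le> 0) \<and> (\<forall>m. xL $ m - \<xi> $ m \<le> 0 \<and> \<xi> $ m - xU $ m \<le> 0)"
  by (simp add: mem_feasible_set relaxation_ineqs_def relaxation_eqs_def Ball_image_comp ball_Un)
    blast

lemma finite_relaxation_ineqs: "finite (relaxation_ineqs H ncv ncc \<phi> \<psi> (xL :: real^'n::finite) xU)"
proof -
  have "finite {(k, j). k \<in> - H \<and> j < n k}" for n :: "'n \<Rightarrow> nat"
    by (rule finite_subset[of _ "SIGMA k:UNIV. {..<n k}"]) auto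
  then show ?thesis
    by (simp add: relaxation_ineqs_def)
qed

lemma relaxation_ineqsE:
  assumes "g \<in> relaxation_ineqs H ncv ncc \<phi> \<psi> xL xU"
  obtains (convex) k j where "k \<in> - H" "j < ncv k" "g = (\<lambda>(z, q). \<phi> k j z q)"
    | (concave) k j where "k \<in> - H" "j < ncc k" "g = (\<lambda>(z, q). - \<psi> k j z q)"
    | (lower) m where "g = (\<lambda>(z, q). xL $ m - z $ m)"
    | (upper) m where "g = (\<lambda>(z, q). z $ m - xU $ m)"
  using assms unfolding relaxation_ineqs_def by auto

lemma bounded_linear_lower_bound_offset:
  fixes xL :: "real^'n::finite"
  shows "bounded_linear (\<lambda>x::(real^'n) \<times> 'p::real_normed_vector.
    (\<lambda>(z, q). xL $ m - z $ m) x - (\<lambda>(z, q). xL $ m - z $ m) 0)"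
proof -
  have "bounded_linear (\<lambda>x::(real^'n) \<times> 'p::real_normed_vector. - (fst x $ m))"
    by (intro bounded_linear_minus bounded_linear_compose[OF bounded_linear_vec_nth bounded_linear_fst])
  then show ?thesis by (simp add: split_beta)
qed

lemma bounded_linear_upper_bound_offset:
  fixes xU :: "real^'n::finite"
  shows "bounded_linear (\<lambda>x::(real^'n) \<times> 'p::real_normed_vector.
    (\<lambda>(z, q). z $ m - xU $ m) x - (\<lambda>(z, q). z $ m - xU $ m) 0)"
proof -
  have "bounded_linear (\<lambda>x::(real^'n) \<times> 'p::real_normed_vector. fst x $ m)"
    by (rule bounded_linear_compose[OF bounded_linear_vec_nth bounded_linear_fst])
  then show ?thesis by (simp add: split_beta)
qed

lemma case_prod_uminus: "(\<lambda>(z, q). - F z q) = (\<lambda>x. - (\<lambda>(z, q). F z q) x)"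
  by (auto simp: fun_eq_iff)

locale implicit_relaxation =
  fixes f fcv fcc :: "real^'n::finite \<Rightarrow> real^'p::finite \<Rightarrow> real^'n"
    and P N :: "(real^'p) set" and xL xU :: "real^'n" and H :: "'n set"
    and A :: "'n \<Rightarrow> real^'n" and C :: "'n \<Rightarrow> real" and Bp :: "'n \<Rightarrow> real^'p"
    and ncv ncc :: "'n \<Rightarrow> nat" and \<phi> \<psi> :: "'n \<Rightarrow> nat \<Rightarrow> real^'n \<Rightarrow> real^'p \<Rightarrow> real"
  assumes P_convex: "convex P"
    and h_affine: "\<forall>k\<in>H. \<forall>z q. f z q $ k = C k + A k \<bullet> z + Bp k \<bullet> q"
    and h_relax: "\<forall>k\<in>H. \<forall>z q. fcv z q $ k = f z q $ k \<and> fcc z q $ k = f z q $ k"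
    and ncv_pos: "\<forall>k\<in>-H. ncv k \<ge> 1" and ncc_pos: "\<forall>k\<in>-H. ncc k \<ge> 1"
    and fcv_max: "\<forall>k\<in>-H. \<forall>z\<in>cbox xL xU. \<forall>q\<in>P. fcv z q $ k = Max {\<phi> k j z q | j. j < ncv k}"
    and fcc_min: "\<forall>k\<in>-H. \<forall>z\<in>cbox xL xU. \<forall>q\<in>P. fcc z q $ k = Min {\<psi> k j z q | j. j < ncc k}"
    and \<phi>_C1: "\<forall>k\<in>-H. \<forall>j<ncv k. C1_fun (\<lambda>(z,q). \<phi> k j z q)"
    and \<phi>_convex: "\<forall>k\<in>-H. \<forall>j<ncv k. convex_on (cbox xL xU \<times> P) (\<lambda>(z,q). \<phi> k j z q)"
    and \<psi>_C1: "\<forall>k\<in>-H. \<forall>j<ncc k. C1_fun (\<lambda>(z,q). \<psi> k j z q)"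
    and \<psi>_concave: "\<forall>k\<in>-H. \<forall>j<ncc k. concave_on (cbox xL xU \<times> P) (\<lambda>(z,q). \<psi> k j z q)"
    and open_N: "open N" and N_subset_P: "N \<subseteq> P"
    and slater: "\<forall>p\<in>N. \<exists>\<xi>\<in>cbox xL xU.
            (\<forall>k\<in>H. f \<xi> p $ k = 0)
          \<and> (\<forall>k\<in>-H. \<forall>j<ncv k. \<phi> k j \<xi> p < 0)
          \<and> (\<forall>k\<in>-H. \<forall>j<ncc k. - \<psi> k j \<xi> p < 0)
          \<and> (\<forall>m. xL $ m - \<xi> $ m < 0 \<and> \<xi> $ m - xU $ m < 0)"
begin

abbreviation "ineqs \<equiv> relaxation_ineqs H ncv ncc \<phi> \<psi> xL xU"
abbreviation "eqs \<equiv> relaxation_eqs f H"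

lemma bounded_linear_eqs_offset:
  assumes "k \<in> H"
  shows "bounded_linear (\<lambda>x. (\<lambda>(z, q). f z q $ k) x - (\<lambda>(z, q). f z q $ k) 0)"
proof -
  have "bounded_linear (\<lambda>x. A k \<bullet> fst x + Bp k \<bullet> snd x)"
    by (intro bounded_linear_add bounded_linear_compose[OF bounded_linear_inner_right]
        bounded_linear_fst bounded_linear_snd)
  then show ?thesis
    using h_affine assms by (simp add: split_beta)
qed

lemma convex_on_relaxation_ineqs:
  assumes "g \<in> ineqs"
  shows "convex_on (cbox xL xU \<times> P) g"
  using assms
proof (cases rule: relaxation_ineqsE)
  case (concave k j)
  then show ?thesis
    using \<psi>_concave by (simp add: concave_on_def case_prod_uminus)
qed (use \<phi>_convex P_convex in \<open>auto intro!: convex_on_affine_function affine_function_offset_linear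
    convex_Times convex_box
    bounded_linear.linear bounded_linear_lower_bound_offset bounded_linear_upper_bound_offset\<close>)

lemma relaxation_ineqs_differentiable:
  assumes "g \<in> ineqs"
  shows "g differentiable (at z)"
  using assms
proof (cases rule: relaxation_ineqsE)
  case (convex k j)
  then show ?thesis
    using \<phi>_C1 C1_fun_differentiable by blast
next
  case (concave k j)
  then have "(\<lambda>(z, q). \<psi> k j z q) differentiable (at z)"
    using \<psi>_C1 C1_fun_differentiable by blast
  then show ?thesis
    unfolding concave(3) case_prod_uminus by (rule differentiable_minus)
qed (auto intro: differentiableI has_derivative_affine
    bounded_linear_lower_bound_offset bounded_linear_upper_bound_offset)

sublocale parametric_convex_program ineqs eqs "cbox xL xU" P N
proof (rule parametric_convex_program.intro)
  fix h assume "h \<in> eqs"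
  then show "bounded_linear (\<lambda>z. h z - h 0)"
    unfolding relaxation_eqs_def using bounded_linear_eqs_offset by blast
next
  show "feasible_set ineqs eqs p \<subseteq> cbox xL xU" for p
    by (auto simp: mem_relaxation_feasible_set mem_box_cart)
next
  fix p assume "p \<in> N"
  then obtain \<xi> where "\<forall>k\<in>H. f \<xi> p $ k = 0" "\<forall>k\<in>-H. \<forall>j<ncv k. \<phi> k j \<xi> p < 0"
    "\<forall>k\<in>-H. \<forall>j<ncc k. - \<psi> k j \<xi> p < 0" "\<forall>m. xL $ m - \<xi> $ m < 0 \<and> \<xi> $ m - xU $ m < 0"
    using slater by blast
  then show "\<exists>\<xi>. (\<forall>g\<in>ineqs. g (\<xi>, p) < 0) \<and> (\<forall>h\<in>eqs. h (\<xi>, p) = 0)"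
    by (intro exI[of _ \<xi>]) (simp add: relaxation_ineqs_def relaxation_eqs_def Ball_image_comp ball_Un)
qed (use finite_relaxation_ineqs convex_on_relaxation_ineqs relaxation_ineqs_differentiable
    bounded_cbox open_N N_subset_P in auto)

lemma relaxation_constraints_eq_feasible_set:
  assumes "p \<in> P"
  shows "{\<xi> \<in> cbox xL xU. \<forall>k. fcv \<xi> p $ k \<le> 0 \<and> 0 \<le> fcc \<xi> p $ k} = feasible_set ineqs eqs p"
proof -
  have componentwise: "fcv \<xi> p $ k \<le> 0 \<and> 0 \<le> fcc \<xi> p $ k \<longleftrightarrow>
      (k \<in> H \<longrightarrow> f \<xi> p $ k = 0) \<and> (k \<in> - H \<longrightarrow> (\<forall>j<ncv k. \<phi> k j \<xi> p \<le> 0) \<and> (\<forall>j<ncc k. - \<psi> k j \<xi> p \<le> 0))"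
    if "\<xi> \<in> cbox xL xU" for \<xi> k
  proof (cases "k \<in> H")
    case True
    then show ?thesis using h_relax by auto
  next
    case False
    then have "1 \<le> ncv k" "1 \<le> ncc k"
      using ncv_pos ncc_pos by (simp_all add: Compl_iff)
    have "{\<phi> k j \<xi> p | j. j < ncv k} = (\<lambda>j. \<phi> k j \<xi> p) ` {..<ncv k}"
      "{\<psi> k j \<xi> p | j. j < ncc k} = (\<lambda>j. \<psi> k j \<xi> p) ` {..<ncc k}"
      by auto
    moreover have "{..<ncv k} \<noteq> {}" "{..<ncc k} \<noteq> {}"
      using \<open>1 \<le> ncv k\<close> \<open>1 \<le> ncc k\<close> by (simp_all add: lessThan_empty_iff)
    ultimately show ?thesis
      using False that assms fcv_max fcc_min by (auto simp: Max_le_iff Min_ge_iff)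
  qed
  have "\<xi> \<in> feasible_set ineqs eqs p \<longleftrightarrow> \<xi> \<in> cbox xL xU \<and>
      (\<forall>k. (k \<in> H \<longrightarrow> f \<xi> p $ k = 0)
        \<and> (k \<in> - H \<longrightarrow> (\<forall>j<ncv k. \<phi> k j \<xi> p \<le> 0) \<and> (\<forall>j<ncc k. - \<psi> k j \<xi> p \<le> 0)))" for \<xi>
    by (auto simp: mem_relaxation_feasible_set mem_box_cart)
  then show ?thesis
    using componentwise by blast
qed

lemma xcv_eq_optimal_value:
  assumes "p \<in> N"
  shows "xcv fcv fcc xL xU i p = ereal (optimal_value (\<lambda>\<xi>. \<xi> $ i) ineqs eqs p)"
proof -
  have "compact ((\<lambda>\<xi>. \<xi> $ i) ` feasible_set ineqs eqs p)"
    using compact_feasible_set by (intro compact_continuous_image linear_continuous_on) auto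
  then have "bdd_below ((\<lambda>\<xi>. \<xi> $ i) ` feasible_set ineqs eqs p)"
    by (intro bounded_imp_bdd_below compact_imp_bounded)
  moreover have "feasible_set ineqs eqs p \<noteq> {}"
    using feasible_set_nonempty[OF assms] .
  moreover have "p \<in> P"
    using assms N_subset_P by blast
  ultimately show ?thesis
    unfolding xcv_def optimal_value_def
    by (simp add: relaxation_constraints_eq_feasible_set ereal_Inf' image_image)
qed

lemma xcv_locally_lipschitz:
  assumes "p0 \<in> N"
  shows "\<exists>e>0. \<exists>L. \<forall>p\<in>ball p0 e. \<forall>q\<in>ball p0 e.
    \<bar>xcv fcv fcc xL xU i p\<bar> \<noteq> \<infinity> \<and>
    \<bar>real_of_ereal (xcv fcv fcc xL xU i p) - real_of_ereal (xcv fcv fcc xL xU i q)\<bar> \<le> L * dist p q"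
proof -
  obtain e L where "0 < e" "ball p0 e \<subseteq> N" and lipschitz:
    "\<And>p q. p \<in> ball p0 e \<Longrightarrow> q \<in> ball p0 e \<Longrightarrow>
      \<bar>optimal_value (\<lambda>\<xi>. \<xi> $ i) ineqs eqs p - optimal_value (\<lambda>\<xi>. \<xi> $ i) ineqs eqs q\<bar> \<le> L * dist p q"
    using optimal_value_locally_lipschitz[OF bounded_linear.linear[OF bounded_linear_vec_nth] assms]
    by blast
  then show ?thesis
    by (intro exI[of _ e] conjI exI[of _ L]) (auto simp: xcv_eq_optimal_value subset_eq)
qed

lemma mem_relaxation_linearized_set:
  "w \<in> linearized_set ineqs eqs (\<xi>0, p0) d \<longleftrightarrow>
     (\<forall>k\<in>-H. \<forall>j<ncv k. \<phi> k j \<xi>0 p0 = 0 \<longrightarrow>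
         frechet_derivative (\<lambda>(z,q). \<phi> k j z q) (at (\<xi>0, p0)) (w, d) \<le> 0)
   \<and> (\<forall>k\<in>-H. \<forall>j<ncc k. \<psi> k j \<xi>0 p0 = 0 \<longrightarrow>
         - frechet_derivative (\<lambda>(z,q). \<psi> k j z q) (at (\<xi>0, p0)) (w, d) \<le> 0)
   \<and> (\<forall>m. xL $ m - \<xi>0 $ m = 0 \<longrightarrow> - w $ m \<le> 0)
   \<and> (\<forall>m. \<xi>0 $ m - xU $ m = 0 \<longrightarrow> w $ m \<le> 0)
   \<and> (\<forall>k\<in>H. A k \<bullet> w = - (Bp k \<bullet> d))"
proof -
  let ?z0 = "(\<xi>0, p0)"
  have concave: "frechet_derivative (\<lambda>(z, q). - \<psi> k j z q) (at ?z0) (w, d)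
      = - frechet_derivative (\<lambda>(z, q). \<psi> k j z q) (at ?z0) (w, d)" if "k \<in> - H" "j < ncc k" for k j
    using that \<psi>_C1 by (simp add: case_prod_uminus frechet_derivative_uminus C1_fun_differentiable)
  have lower: "frechet_derivative (\<lambda>(z, q). a $ m - z $ m) (at ?z0) (w, d) = - w $ m" for a m
    by (simp add: frechet_derivative_affine[OF bounded_linear_lower_bound_offset] zero_prod_def)
  have upper: "frechet_derivative (\<lambda>(z, q). z $ m - b $ m) (at ?z0) (w, d) = w $ m" for b m
    by (simp add: frechet_derivative_affine[OF bounded_linear_upper_bound_offset] zero_prod_def)
  have eq: "frechet_derivative (\<lambda>(z, q). f z q $ k) (at ?z0) (w, d) = A k \<bullet> w + Bp k \<bullet> d"
    if "k \<in> H" for k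
    unfolding frechet_derivative_affine[OF bounded_linear_eqs_offset[OF that]]
    using that h_affine by (simp add: zero_prod_def)
  show ?thesis
    unfolding mem_linearized_set relaxation_ineqs_def relaxation_eqs_def
    by (auto simp: Ball_image_comp ball_Un concave lower upper eq add_eq_0_iff)
qed

lemma xcv_directional_derivative:
  assumes "phat \<in> N" "\<xi>hat \<in> feasible_set ineqs eqs phat"
    and "\<forall>\<xi>\<in>feasible_set ineqs eqs phat. \<xi>hat $ i \<le> \<xi> $ i"
  shows "\<exists>w\<in>linearized_set ineqs eqs (\<xi>hat, phat) d.
    (\<forall>w'\<in>linearized_set ineqs eqs (\<xi>hat, phat) d. w $ i \<le> w' $ i) \<and>
    has_dir_deriv (\<lambda>p. real_of_ereal (xcv fcv fcc xL xU i p)) phat d (w $ i)"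
proof -
  let ?V = "optimal_value (\<lambda>\<xi>. \<xi> $ i) ineqs eqs"
  obtain w where w: "w \<in> linearized_set ineqs eqs (\<xi>hat, phat) d"
      "\<forall>w'\<in>linearized_set ineqs eqs (\<xi>hat, phat) d. w $ i \<le> w' $ i"
    and quotient: "((\<lambda>t. (?V (phat + t *\<^sub>R d) - ?V phat) / t) \<longlongrightarrow> w $ i) (at_right 0)"
    using optimal_value_directional_derivative[OF bounded_linear.linear[OF bounded_linear_vec_nth] assms(1)]
      assms(2,3) by blast
  have same_quotient: "eventually (\<lambda>t. (?V (phat + t *\<^sub>R d) - ?V phat) / t =
      (real_of_ereal (xcv fcv fcc xL xU i (phat + t *\<^sub>R d)) - real_of_ereal (xcv fcv fcc xL xU i phat)) / t)
      (at_right 0)"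
    using eventually_at_right_in_open[OF open_N assms(1), where d = d]
    by eventually_elim (simp add: xcv_eq_optimal_value assms(1))
  have "has_dir_deriv (\<lambda>p. real_of_ereal (xcv fcv fcc xL xU i p)) phat d (w $ i)"
    unfolding has_dir_deriv_def using quotient tendsto_cong[OF same_quotient] by blast
  with w show ?thesis by blast
qed

end

theorem proposition5p1:
  fixes f fcv fcc :: "real^'n::finite \<Rightarrow> real^'p::finite \<Rightarrow> real^'n"
    and P Q :: "(real^'p) set"
    and xL xU :: "real^'n"
    and x :: "real^'p \<Rightarrow> real^'n"
    and H :: "'n set"
    and A B :: "'n \<Rightarrow> real^'n" and C :: "'n \<Rightarrow> real" and Bp :: "'n \<Rightarrow> real^'p"
    and ncv ncc :: "'n \<Rightarrow> nat"
    and \<phi> \<psi> :: "'n \<Rightarrow> nat \<Rightarrow> real^'n \<Rightarrow> real^'p \<Rightarrow> real"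
    and i :: 'n and phat :: "real^'p" and \<xi>hat :: "real^'n"
  assumes P_convex: "convex P" and P_compact: "compact P"
    and Q_def: "Q = {p \<in> P. \<exists>z. f z p = 0}" and Q_ne: "Q \<noteq> {}"
    and x_implicit: "\<forall>p\<in>Q. f (x p) p = 0 \<and> x p \<in> cbox xL xU"
    \<comment> \<open>convex / concave relaxations of f on X \<times> P\<close>
    and fcv_convex: "\<forall>k. convex_on (cbox xL xU \<times> P) (\<lambda>(z,q). fcv z q $ k)"
    and fcc_concave: "\<forall>k. concave_on (cbox xL xU \<times> P) (\<lambda>(z,q). fcc z q $ k)"
    and relax: "\<forall>z\<in>cbox xL xU. \<forall>q\<in>P. \<forall>k. fcv z q $ k \<le> f z q $ k \<and> f z q $ k \<le> fcc z q $ k"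
    \<comment> \<open>components in H form the affine part h; the others (f tilde) are not affine\<close>
    and h_affine: "\<forall>k\<in>H. \<forall>z q. f z q $ k = C k + A k \<bullet> z + Bp k \<bullet> q"
    and ftilde_not_affine: "\<forall>k\<in>-H. \<not> (\<exists>c a b. \<forall>z q. f z q $ k = c + a \<bullet> z + b \<bullet> q)"
    and h_relax: "\<forall>k\<in>H. \<forall>z q. fcv z q $ k = f z q $ k \<and> fcc z q $ k = f z q $ k"
    \<comment> \<open>piecewise differentiable relaxations of f tilde\<close>
    and ncv_pos: "\<forall>k\<in>-H. ncv k \<ge> 1" and ncc_pos: "\<forall>k\<in>-H. ncc k \<ge> 1"
    and fcv_max: "\<forall>k\<in>-H. \<forall>z\<in>cbox xL xU. \<forall>q\<in>P. fcv z q $ k = Max {\<phi> k j z q | j. j < ncv k}"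
    and fcc_min: "\<forall>k\<in>-H. \<forall>z\<in>cbox xL xU. \<forall>q\<in>P. fcc z q $ k = Min {\<psi> k j z q | j. j < ncc k}"
    and \<phi>_C1: "\<forall>k\<in>-H. \<forall>j<ncv k. C1_fun (\<lambda>(z,q). \<phi> k j z q)"
    and \<phi>_convex: "\<forall>k\<in>-H. \<forall>j<ncv k. convex_on (cbox xL xU \<times> P) (\<lambda>(z,q). \<phi> k j z q)"
    and \<psi>_C1: "\<forall>k\<in>-H. \<forall>j<ncc k. C1_fun (\<lambda>(z,q). \<psi> k j z q)"
    and \<psi>_concave: "\<forall>k\<in>-H. \<forall>j<ncc k. concave_on (cbox xL xU \<times> P) (\<lambda>(z,q). \<psi> k j z q)"
    \<comment> \<open>assumptions at phat\<close>
    and phat_int: "phat \<in> interior Q"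
    and LICQ_h: "\<forall>c. (\<Sum>k\<in>H. c k *\<^sub>R A k) = 0 \<longrightarrow> (\<forall>k\<in>H. c k = 0)"
    and strong_slater: "\<exists>N. open N \<and> phat \<in> N \<and> N \<subseteq> Q \<and>
        (\<forall>p\<in>N. \<exists>\<xi>\<in>cbox xL xU.
            (\<forall>k\<in>H. f \<xi> p $ k = 0)
          \<and> (\<forall>k\<in>-H. \<forall>j<ncv k. \<phi> k j \<xi> p < 0)
          \<and> (\<forall>k\<in>-H. \<forall>j<ncc k. - \<psi> k j \<xi> p < 0)
          \<and> (\<forall>m. xL $ m - \<xi> $ m < 0 \<and> \<xi> $ m - xU $ m < 0))"
    \<comment> \<open>\<xi>hat is an optimal solution of the NLP at phat\<close>
    and \<xi>hat_feas: "(\<forall>k\<in>H. f \<xi>hat phat $ k = 0)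
          \<and> (\<forall>k\<in>-H. \<forall>j<ncv k. \<phi> k j \<xi>hat phat \<le> 0)
          \<and> (\<forall>k\<in>-H. \<forall>j<ncc k. - \<psi> k j \<xi>hat phat \<le> 0)
          \<and> (\<forall>m. xL $ m - \<xi>hat $ m \<le> 0 \<and> \<xi>hat $ m - xU $ m \<le> 0)"
    and \<xi>hat_opt: "\<forall>\<xi>. ((\<forall>k\<in>H. f \<xi> phat $ k = 0)
          \<and> (\<forall>k\<in>-H. \<forall>j<ncv k. \<phi> k j \<xi> phat \<le> 0)
          \<and> (\<forall>k\<in>-H. \<forall>j<ncc k. - \<psi> k j \<xi> phat \<le> 0)
          \<and> (\<forall>m. xL $ m - \<xi> $ m \<le> 0 \<and> \<xi> $ m - xU $ m \<le> 0)) \<longrightarrow> \<xi>hat $ i \<le> \<xi> $ i"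
  shows
    \<comment> \<open>local Lipschitz continuity at phat (with finite values near phat)\<close>
    "(\<exists>e>0. \<exists>L. \<forall>p\<in>ball phat e. \<forall>q\<in>ball phat e.
        \<bar>xcv fcv fcc xL xU i p\<bar> \<noteq> \<infinity> \<and>
        \<bar>real_of_ereal (xcv fcv fcc xL xU i p) - real_of_ereal (xcv fcv fcc xL xU i q)\<bar> \<le> L * dist p q)
   \<and> (\<forall>d. \<exists>w.
        \<comment> \<open>w is feasible for the linearized problem\<close>
        (let lin = (\<lambda>w::real^'n.
             (\<forall>k\<in>-H. \<forall>j<ncv k. \<phi> k j \<xi>hat phat = 0 \<longrightarrow>
                 frechet_derivative (\<lambda>(z,q). \<phi> k j z q) (at (\<xi>hat, phat)) (w, d) \<le> 0)
           \<and> (\<forall>k\<in>-H. \<forall>j<ncc k. \<psi> k j \<xi>hat phat = 0 \<longrightarrow>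
                 - frechet_derivative (\<lambda>(z,q). \<psi> k j z q) (at (\<xi>hat, phat)) (w, d) \<le> 0)
           \<and> (\<forall>m. xL $ m - \<xi>hat $ m = 0 \<longrightarrow> - w $ m \<le> 0)
           \<and> (\<forall>m. \<xi>hat $ m - xU $ m = 0 \<longrightarrow> w $ m \<le> 0)
           \<and> (\<forall>k\<in>H. A k \<bullet> w = - (Bp k \<bullet> d)))
         in lin w \<and> (\<forall>w'. lin w' \<longrightarrow> w $ i \<le> w' $ i)
            \<and> has_dir_deriv (\<lambda>p. real_of_ereal (xcv fcv fcc xL xU i p)) phat d (w $ i)))"
proof -
  obtain N where N: "open N" "phat \<in> N" "N \<subseteq> Q" and slater_N: "\<forall>p\<in>N. \<exists>\<xi>\<in>cbox xL xU.
            (\<forall>k\<in>H. f \<xi> p $ k = 0)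
          \<and> (\<forall>k\<in>-H. \<forall>j<ncv k. \<phi> k j \<xi> p < 0)
          \<and> (\<forall>k\<in>-H. \<forall>j<ncc k. - \<psi> k j \<xi> p < 0)
          \<and> (\<forall>m. xL $ m - \<xi> $ m < 0 \<and> \<xi> $ m - xU $ m < 0)"
    using strong_slater by blast
  have "N \<subseteq> P"
    using N(3) Q_def by blast
  interpret implicit_relaxation f fcv fcc P N xL xU H A C Bp ncv ncc \<phi> \<psi>
    by (rule implicit_relaxation.intro; fact)
  have "\<xi>hat \<in> feasible_set ineqs eqs phat" "\<forall>\<xi>\<in>feasible_set ineqs eqs phat. \<xi>hat $ i \<le> \<xi> $ i"
    using \<xi>hat_feas \<xi>hat_opt by (simp_all add: mem_relaxation_feasible_set)
  from xcv_directional_derivative[OF N(2) this] xcv_locally_lipschitz[OF N(2)] show ?thesis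
    unfolding Let_def Ball_def Bex_def mem_relaxation_linearized_set by blast
qed

end
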